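(* For every fixed $k\in\mathbb{N}$, the polynomial $h_k$ is weakly distinguishing.
   Context: All graphs are finite and simple. Fix $k\in\mathbb{N}$. For a graph $G$ and $\lambda\in\mathbb{N}$, a proper colouring $f:V(G)\to[\lambda]$ is $k$-harmonious if whenever $\{v_1,\dots,v_k\}$ and $\{u_1,\dots,u_k\}$ are vertex sets inducing complete graphs of size $k$ with $f(\{v_1,\dots,v_k\})=f(\{u_1,\dots,u_k\})$, then $\{v_1,\dots,v_k\}=\{u_1,\dots,u_k\}$. $h_k(G;\lambda)$ is the number of proper $k$-harmonious colourings $f:V(G)\to[\lambda]$; it is a polynomial in $\lambda$. A graph $G$ is $P$-unique if every graph $H$ with $P(G)=P(H)$ is isomorphic to $G$. With $\mathcal{G}(n)$ the set of isomorphism classes of graphs on $n$ vertices and $U_P(n)$ the $P$-unique graphs in $\mathcal{G}(n)$, $P$ is weakly distinguishing if $\lim_{n\to\infty}|U_P(n)|/|\mathcal{G}(n)|=0$. *)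

theory Defs
  imports Complex_Main "HOL-Library.FuncSet"
begin

definition graph_on :: "nat \<Rightarrow> nat set set \<Rightarrow> bool" where
  "graph_on n E \<longleftrightarrow> (\<forall>e\<in>E. e \<subseteq> {..<n} \<and> card e = 2)"

definition iso_graph :: "nat \<Rightarrow> nat set set \<Rightarrow> nat set set \<Rightarrow> bool" where
  "iso_graph n E E' \<longleftrightarrow> (\<exists>\<pi>. bij_betw \<pi> {..<n} {..<n} \<and> E' = (\<lambda>e. \<pi> ` e) ` E)"

definition is_clique :: "nat \<Rightarrow> nat set set \<Rightarrow> nat \<Rightarrow> nat set \<Rightarrow> bool" where
  "is_clique n E k S \<longleftrightarrow> S \<subseteq> {..<n} \<and> card S = k \<and>
     (\<forall>u\<in>S. \<forall>v\<in>S. u \<noteq> v \<longrightarrow> {u, v} \<in> E)"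

definition proper_colouring :: "nat \<Rightarrow> nat set set \<Rightarrow> (nat \<Rightarrow> nat) \<Rightarrow> bool" where
  "proper_colouring n E f \<longleftrightarrow> (\<forall>u<n. \<forall>v<n. {u, v} \<in> E \<longrightarrow> f u \<noteq> f v)"

definition harmonious :: "nat \<Rightarrow> nat \<Rightarrow> nat set set \<Rightarrow> (nat \<Rightarrow> nat) \<Rightarrow> bool" where
  "harmonious k n E f \<longleftrightarrow> (\<forall>S T. is_clique n E k S \<and> is_clique n E k T \<and> f ` S = f ` T \<longrightarrow> S = T)"

text \<open>The polynomial h_k(G) is represented by its value function on the naturals
(a polynomial is determined by its values on infinitely many points).\<close>
definition h_harm :: "nat \<Rightarrow> nat \<Rightarrow> nat set set \<Rightarrow> nat \<Rightarrow> nat" where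
  "h_harm k n E q = card {f \<in> {..<n} \<rightarrow>\<^sub>E {1..q}. proper_colouring n E f \<and> harmonious k n E f}"

definition P_unique :: "(nat \<Rightarrow> nat set set \<Rightarrow> 'b) \<Rightarrow> nat \<Rightarrow> nat set set \<Rightarrow> bool" where
  "P_unique P n E \<longleftrightarrow> (\<forall>m E'. graph_on m E' \<and> P m E' = P n E \<longrightarrow> m = n \<and> iso_graph n E E')"

definition iso_class :: "nat \<Rightarrow> nat set set \<Rightarrow> nat set set set" where
  "iso_class n E = {E'. graph_on n E' \<and> iso_graph n E E'}"

definition graph_classes :: "nat \<Rightarrow> nat set set set set" where
  "graph_classes n = iso_class n ` {E. graph_on n E}"

definition unique_classes :: "(nat \<Rightarrow> nat set set \<Rightarrow> 'b) \<Rightarrow> nat \<Rightarrow> nat set set set set" where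
  "unique_classes P n = iso_class n ` {E. graph_on n E \<and> P_unique P n E}"

definition weakly_distinguishing :: "(nat \<Rightarrow> nat set set \<Rightarrow> 'b) \<Rightarrow> bool" where
  "weakly_distinguishing P \<longleftrightarrow>
     (\<lambda>n. real (card (unique_classes P n)) / real (card (graph_classes n))) \<longlonglongrightarrow> 0"

end

theory Submission
  imports Defs "HOL-Combinatorics.Permutations" "HOL-Real_Asymp.Real_Asymp"
begin

text \<open>
  Call G clique-linked if any two distinct vertices u, v have k - 1 common neighbours
  forming a clique W. Then W + u and W + v are k-cliques, which a harmonious colouring must
  colour differently, so u and v get different colours: the proper k-harmonious colourings
  of G are exactly the injective ones and h_k(G) depends on n only. Both K_n and K_n minus
  an edge are clique-linked once n \<ge> k + 3, so no clique-linked graph is h_k-unique.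

  Almost every labelled graph is clique-linked: for fixed u, v the other vertices contain
  (n - 2) div (k - 1) disjoint blocks of size k - 1, and each block independently fails to
  complete a (k + 1)-clique with u and v (the edge uv aside) with probability
  1 - 2^(1 - C(k + 1, 2)). To pass to isomorphism classes, use that the size of the class
  of a graph times the number of its automorphisms is n!. A permutation moving s vertices
  maps every edge of some set D of at least s(n - 3)/8 edges outside D, and a graph it
  fixes is determined by its edges outside D; summed over all nonidentity permutations the
  fixed graphs are o(2^C(n, 2)), so the classes of a relabelling-closed family number its
  size divided by n! up to an error that is negligible against the 2^C(n, 2)/n! classes of
  all graphs.
\<close>

definition two_subsets :: "'a set \<Rightarrow> 'a set set" where
  "two_subsets V = {e. e \<subseteq> V \<and> card e = 2}"

definition relabel :: "(nat \<Rightarrow> nat) \<Rightarrow> nat set set \<Rightarrow> nat set set" where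
  "relabel p E = (\<lambda>e. p ` e) ` E"

definition vertex_perms :: "nat \<Rightarrow> (nat \<Rightarrow> nat) set" where
  "vertex_perms n = {p. p permutes {..<n}}"

definition automorphisms :: "nat \<Rightarrow> nat set set \<Rightarrow> (nat \<Rightarrow> nat) set" where
  "automorphisms n E = {p \<in> vertex_perms n. relabel p E = E}"

lemma finite_two_subsets: "finite V \<Longrightarrow> finite (two_subsets V)"
  by (rule finite_subset[of _ "Pow V"]) (auto simp: two_subsets_def)

lemma card_two_subsets: "finite V \<Longrightarrow> card (two_subsets V) = card V choose 2"
  by (simp add: two_subsets_def n_subsets)

lemma two_subsets_mono: "V \<subseteq> W \<Longrightarrow> two_subsets V \<subseteq> two_subsets W"
  by (auto simp: two_subsets_def)

lemma doubleton_in_two_subsets: "a \<in> V \<Longrightarrow> b \<in> V \<Longrightarrow> a \<noteq> b \<Longrightarrow> {a, b} \<in> two_subsets V"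
  by (simp add: two_subsets_def)

lemma two_subsets_subset_iff:
  "two_subsets V \<subseteq> E \<longleftrightarrow> (\<forall>a\<in>V. \<forall>b\<in>V. a \<noteq> b \<longrightarrow> {a, b} \<in> E)"
proof (intro iffI ballI impI subsetI)
  fix a b assume "two_subsets V \<subseteq> E" "a \<in> V" "b \<in> V" "a \<noteq> b"
  then show "{a, b} \<in> E" by (meson doubleton_in_two_subsets subsetD)
next
  fix e assume E: "\<forall>a\<in>V. \<forall>b\<in>V. a \<noteq> b \<longrightarrow> {a, b} \<in> E" and "e \<in> two_subsets V"
  then obtain a b where "e = {a, b}" "a \<noteq> b" "e \<subseteq> V"
    by (auto simp: two_subsets_def card_2_iff)
  with E show "e \<in> E" by simp
qed

lemma graph_on_iff: "graph_on n E \<longleftrightarrow> E \<subseteq> two_subsets {..<n}"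
  by (auto simp: graph_on_def two_subsets_def)

lemma relabel_two_subsets:
  assumes "inj_on p V"
  shows "relabel p (two_subsets V) = two_subsets (p ` V)"
proof
  show "relabel p (two_subsets V) \<subseteq> two_subsets (p ` V)"
  proof
    fix e assume "e \<in> relabel p (two_subsets V)"
    then obtain d where d: "d \<subseteq> V" "card d = 2" "e = p ` d"
      by (auto simp: relabel_def two_subsets_def)
    moreover have "card (p ` d) = card d" by (rule card_image) (rule inj_on_subset[OF assms d(1)])
    ultimately have "card e = 2" by simp
    then show "e \<in> two_subsets (p ` V)" using d by (auto simp: two_subsets_def)
  qed
  show "two_subsets (p ` V) \<subseteq> relabel p (two_subsets V)"
  proof
    fix e assume "e \<in> two_subsets (p ` V)"
    then have e: "e \<subseteq> p ` V" "card e = 2" by (auto simp: two_subsets_def)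
    define d where "d = inv_into V p ` e"
    have "p ` d = e" using e(1) by (simp add: d_def image_inv_into_cancel)
    moreover have "d \<subseteq> V" using e(1) by (auto simp: d_def inv_into_into)
    moreover have "card (p ` d) = card d" by (rule card_image) (rule inj_on_subset[OF assms \<open>d \<subseteq> V\<close>])
    ultimately show "e \<in> relabel p (two_subsets V)"
      using e(2) unfolding relabel_def two_subsets_def by auto
  qed
qed

lemma finite_vertex_perms: "finite (vertex_perms n)"
  by (simp add: vertex_perms_def finite_permutations)

lemma card_vertex_perms: "card (vertex_perms n) = fact n"
  by (simp add: vertex_perms_def card_permutations)

lemma id_in_vertex_perms: "id \<in> vertex_perms n"
  by (simp add: vertex_perms_def permutes_id)

lemma inv_in_vertex_perms: "p \<in> vertex_perms n \<Longrightarrow> inv p \<in> vertex_perms n"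
  by (simp add: vertex_perms_def permutes_inv)

lemma comp_in_vertex_perms: "p \<in> vertex_perms n \<Longrightarrow> q \<in> vertex_perms n \<Longrightarrow> p \<circ> q \<in> vertex_perms n"
  by (simp add: vertex_perms_def permutes_compose)

lemma inj_image_vertex_perm: "p \<in> vertex_perms n \<Longrightarrow> inj (image p)"
  using inj_on_image_Pow[OF permutes_inj[of p "{..<n}"]] by (simp add: vertex_perms_def)

lemma relabel_id [simp]: "relabel id E = E"
  by (simp add: relabel_def)

lemma relabel_comp: "relabel (p \<circ> q) E = relabel p (relabel q E)"
  by (auto simp: relabel_def image_comp image_image)

lemma relabel_inv_relabel: "p \<in> vertex_perms n \<Longrightarrow> relabel (inv p) (relabel p E) = E"
  by (metis vertex_perms_def relabel_comp relabel_id permutes_inv_o(2) mem_Collect_eq)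

lemma relabel_cong:
  assumes "E \<subseteq> two_subsets {..<n}" and "\<And>x. x < n \<Longrightarrow> p x = q x"
  shows "relabel p E = relabel q E"
  unfolding relabel_def
proof (rule image_cong[OF refl])
  fix e assume "e \<in> E"
  then have "e \<subseteq> {..<n}" using assms(1) by (auto simp: two_subsets_def)
  then show "p ` e = q ` e" using assms(2) by (auto intro!: image_cong)
qed

lemma relabel_mono: "E \<subseteq> F \<Longrightarrow> relabel p E \<subseteq> relabel p F"
  by (auto simp: relabel_def)

lemma relabel_graph:
  assumes "p \<in> vertex_perms n" and "E \<subseteq> two_subsets {..<n}"
  shows "relabel p E \<subseteq> two_subsets {..<n}"
proof -
  have "p permutes {..<n}" using assms(1) by (simp add: vertex_perms_def)
  then have "relabel p (two_subsets {..<n}) = two_subsets {..<n}"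
    by (simp add: relabel_two_subsets permutes_inj_on permutes_image)
  then show ?thesis using relabel_mono[OF assms(2), of p] by simp
qed

lemma card_relabel: "p \<in> vertex_perms n \<Longrightarrow> card (relabel p E) = card E"
  unfolding relabel_def by (rule card_image) (simp add: inj_on_subset[OF inj_image_vertex_perm])

lemma iso_class_eq_relabellings:
  assumes "E \<subseteq> two_subsets {..<n}"
  shows "iso_class n E = (\<lambda>p. relabel p E) ` vertex_perms n"
proof
  show "(\<lambda>p. relabel p E) ` vertex_perms n \<subseteq> iso_class n E"
  proof
    fix E' assume "E' \<in> (\<lambda>p. relabel p E) ` vertex_perms n"
    then obtain p where p: "p \<in> vertex_perms n" "E' = relabel p E" by auto
    have "bij_betw p {..<n} {..<n}" using p(1) by (simp add: vertex_perms_def permutes_imp_bij)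
    then show "E' \<in> iso_class n E" using p relabel_graph[OF p(1) assms]
      by (auto simp: iso_class_def graph_on_iff iso_graph_def relabel_def)
  qed
  show "iso_class n E \<subseteq> (\<lambda>p. relabel p E) ` vertex_perms n"
  proof
    fix E' assume "E' \<in> iso_class n E"
    then obtain \<pi> where \<pi>: "bij_betw \<pi> {..<n} {..<n}" "E' = relabel \<pi> E"
      by (auto simp: iso_class_def iso_graph_def relabel_def)
    \<comment> \<open>\<pi> need not fix the points outside {..<n}; make it the identity there\<close>
    define p where "p x = (if x < n then \<pi> x else x)" for x
    have "bij_betw p {..<n} {..<n}" using \<pi>(1) by (rule bij_betw_cong[THEN iffD1, rotated]) (simp add: p_def)
    moreover have "\<And>x. x \<notin> {..<n} \<Longrightarrow> p x = x" by (simp add: p_def)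
    ultimately have "p \<in> vertex_perms n"
      unfolding vertex_perms_def mem_Collect_eq by (rule bij_imp_permutes)
    moreover have "relabel p E = E'" unfolding \<pi>(2) by (rule relabel_cong[OF assms]) (simp add: p_def)
    ultimately show "E' \<in> (\<lambda>p. relabel p E) ` vertex_perms n" by blast
  qed
qed

lemma relabel_in_iso_class:
  "E \<subseteq> two_subsets {..<n} \<Longrightarrow> p \<in> vertex_perms n \<Longrightarrow> relabel p E \<in> iso_class n E"
  by (simp add: iso_class_eq_relabellings)

lemma in_iso_class_self: "E \<subseteq> two_subsets {..<n} \<Longrightarrow> E \<in> iso_class n E"
  using relabel_in_iso_class[OF _ id_in_vertex_perms] by simp

lemma finite_iso_class: "E \<subseteq> two_subsets {..<n} \<Longrightarrow> finite (iso_class n E)"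
  by (simp add: iso_class_eq_relabellings finite_vertex_perms)

lemma iso_class_eq_iso_class:
  assumes E: "E \<subseteq> two_subsets {..<n}" and E': "E' \<in> iso_class n E"
  shows "iso_class n E' = iso_class n E"
proof -
  obtain r where r: "r \<in> vertex_perms n" "E' = relabel r E"
    using E' iso_class_eq_relabellings[OF E] by auto
  have E'_graph: "E' \<subseteq> two_subsets {..<n}" using relabel_graph[OF r(1) E] r(2) by simp
  have "relabel p E' \<in> iso_class n E" if "p \<in> vertex_perms n" for p
    using relabel_in_iso_class[OF E comp_in_vertex_perms[OF that r(1)]] r(2) by (simp add: relabel_comp)
  moreover have "relabel p E \<in> iso_class n E'" if "p \<in> vertex_perms n" for p
    using relabel_in_iso_class[OF E'_graph comp_in_vertex_perms[OF that inv_in_vertex_perms[OF r(1)]]]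
      r by (simp add: relabel_comp relabel_inv_relabel)
  ultimately show ?thesis
    unfolding iso_class_eq_relabellings[OF E] iso_class_eq_relabellings[OF E'_graph] by blast
qed

lemma card_iso_class_mult_automorphisms:
  assumes E: "E \<subseteq> two_subsets {..<n}"
  shows "card (iso_class n E) * card (automorphisms n E) = fact n"
proof -
  let ?f = "\<lambda>p. relabel p E"
  have fibre: "card {p \<in> vertex_perms n. ?f p = ?f r} = card (automorphisms n E)"
    if r: "r \<in> vertex_perms n" for r
  proof -
    have "{p \<in> vertex_perms n. ?f p = ?f r} = (\<lambda>t. r \<circ> t) ` automorphisms n E"
    proof (intro equalityI subsetI)
      fix p assume p: "p \<in> {p \<in> vertex_perms n. ?f p = ?f r}"
      have "inv r \<circ> p \<in> automorphisms n E"
        using p r by (auto simp: automorphisms_def comp_in_vertex_perms inv_in_vertex_perms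
            relabel_comp relabel_inv_relabel)
      moreover have "r \<circ> (inv r \<circ> p) = p"
        using r by (simp add: vertex_perms_def o_assoc permutes_inv_o(1))
      ultimately show "p \<in> (\<lambda>t. r \<circ> t) ` automorphisms n E" by (metis image_eqI)
    qed (use r in \<open>auto simp: automorphisms_def comp_in_vertex_perms relabel_comp\<close>)
    moreover have "inj_on (\<lambda>t. r \<circ> t) (automorphisms n E)"
      using r by (intro inj_onI) (metis vertex_perms_def mem_Collect_eq o_assoc permutes_inv_o(2) id_comp)
    ultimately show ?thesis by (simp add: card_image)
  qed
  have "fact n = card (vertex_perms n)" by (simp add: card_vertex_perms)
  also have "\<dots> = (\<Sum>E'\<in>?f ` vertex_perms n. card {p \<in> vertex_perms n. ?f p = E'})"
    unfolding card_eq_sum by (rule sum.image_gen[OF finite_vertex_perms])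
  also have "\<dots> = (\<Sum>E'\<in>?f ` vertex_perms n. card (automorphisms n E))"
    using fibre by (intro sum.cong) auto
  also have "\<dots> = card (iso_class n E) * card (automorphisms n E)"
    by (simp add: iso_class_eq_relabellings[OF E])
  finally show ?thesis by simp
qed

lemma sum_automorphisms_iso_class:
  assumes E0: "E0 \<subseteq> two_subsets {..<n}"
  shows "(\<Sum>E\<in>iso_class n E0. card (automorphisms n E)) = fact n"
proof -
  let ?C = "iso_class n E0"
  have "card ?C * card (automorphisms n E) = fact n" if "E \<in> ?C" for E
  proof -
    have "E \<subseteq> two_subsets {..<n}" using that by (simp add: iso_class_def graph_on_iff)
    then show ?thesis
      using card_iso_class_mult_automorphisms iso_class_eq_iso_class[OF E0 that] by metis
  qed
  then have "card ?C * (\<Sum>E\<in>?C. card (automorphisms n E)) = card ?C * fact n"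
    by (simp add: sum_distrib_left)
  moreover have "card ?C > 0"
    using E0 in_iso_class_self finite_iso_class card_gt_0_iff by blast
  ultimately show ?thesis by simp
qed

lemma card_iso_classes_mult_fact:
  assumes graphs: "X \<subseteq> Pow (two_subsets {..<n})"
    and closed: "\<And>E p. E \<in> X \<Longrightarrow> p \<in> vertex_perms n \<Longrightarrow> relabel p E \<in> X"
  shows "card (iso_class n ` X) * fact n = (\<Sum>E\<in>X. card (automorphisms n E))"
proof -
  have "finite X" using graphs by (rule finite_subset) (simp add: finite_two_subsets)
  have class_eq: "{E\<in>X. iso_class n E = iso_class n E0} = iso_class n E0" if "E0 \<in> X" for E0
  proof (intro equalityI subsetI)
    fix E assume E: "E \<in> {E\<in>X. iso_class n E = iso_class n E0}"
    then have "E \<subseteq> two_subsets {..<n}" using graphs by blast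
    then have "E \<in> iso_class n E" by (rule in_iso_class_self)
    then show "E \<in> iso_class n E0" using E by simp
  next
    have E0_graph: "E0 \<subseteq> two_subsets {..<n}" using graphs that by auto
    fix E assume "E \<in> iso_class n E0"
    then obtain p where "p \<in> vertex_perms n" "E = relabel p E0"
      using iso_class_eq_relabellings[OF E0_graph] by auto
    then show "E \<in> {E\<in>X. iso_class n E = iso_class n E0}"
      using closed that iso_class_eq_iso_class[OF E0_graph] \<open>E \<in> iso_class n E0\<close> by auto
  qed
  have class_sum: "(\<Sum>E\<in>{E\<in>X. iso_class n E = C}. card (automorphisms n E)) = fact n"
    if C: "C \<in> iso_class n ` X" for C
  proof -
    obtain E0 where "E0 \<in> X" "C = iso_class n E0" using C by blast
    moreover have "E0 \<subseteq> two_subsets {..<n}" using graphs \<open>E0 \<in> X\<close> by blast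
    ultimately show ?thesis by (simp only: class_eq sum_automorphisms_iso_class)
  qed
  have "(\<Sum>E\<in>X. card (automorphisms n E)) =
        (\<Sum>C\<in>iso_class n ` X. \<Sum>E\<in>{E\<in>X. iso_class n E = C}. card (automorphisms n E))"
    by (rule sum.image_gen[OF \<open>finite X\<close>])
  also have "\<dots> = card (iso_class n ` X) * fact n" using class_sum by simp
  finally show ?thesis by simp
qed

definition fixed_graphs :: "nat \<Rightarrow> (nat \<Rightarrow> nat) \<Rightarrow> nat set set set" where
  "fixed_graphs n p = {E. E \<subseteq> two_subsets {..<n} \<and> relabel p E = E}"

lemma finite_fixed_graphs: "finite (fixed_graphs n p)"
  by (rule finite_subset[of _ "Pow (two_subsets {..<n})"]) (auto simp: fixed_graphs_def finite_two_subsets)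

lemma sum_automorphisms_le:
  assumes graphs: "X \<subseteq> Pow (two_subsets {..<n})"
  shows "(\<Sum>E\<in>X. card (automorphisms n E)) \<le> card X + (\<Sum>p\<in>vertex_perms n - {id}. card (fixed_graphs n p))"
proof -
  have "finite X" using graphs by (rule finite_subset) (simp add: finite_two_subsets)
  have "(\<Sum>E\<in>X. card (automorphisms n E)) = (\<Sum>p\<in>vertex_perms n. card {E \<in> X. relabel p E = E})"
    unfolding automorphisms_def
    using sum.swap_restrict[OF \<open>finite X\<close> finite_vertex_perms, where g="\<lambda>_ _. 1::nat"
        and R="\<lambda>E p. relabel p E = E"] by simp
  also have "\<dots> = card {E \<in> X. relabel id E = E} +
      (\<Sum>p\<in>vertex_perms n - {id}. card {E \<in> X. relabel p E = E})"
    using sum.remove[OF finite_vertex_perms id_in_vertex_perms] by blast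
  also have "\<dots> \<le> card X + (\<Sum>p\<in>vertex_perms n - {id}. card (fixed_graphs n p))"
    using graphs \<open>finite X\<close>
    by (intro add_mono sum_mono card_mono finite_fixed_graphs) (auto simp: fixed_graphs_def)
  finally show ?thesis .
qed

section \<open>Graphs in which every pair of vertices has a common clique\<close>

definition clique_linked :: "nat \<Rightarrow> nat \<Rightarrow> nat set set \<Rightarrow> nat \<Rightarrow> nat \<Rightarrow> bool" where
  "clique_linked k n E u v \<longleftrightarrow> (\<exists>W. W \<subseteq> {..<n} - {u, v} \<and> card W = k - 1 \<and>
     two_subsets (insert u (insert v W)) - {{u, v}} \<subseteq> E)"

definition all_pairs_clique_linked :: "nat \<Rightarrow> nat \<Rightarrow> nat set set \<Rightarrow> bool" where
  "all_pairs_clique_linked k n E \<longleftrightarrow> (\<forall>u<n. \<forall>v<n. u \<noteq> v \<longrightarrow> clique_linked k n E u v)"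

lemma is_clique_iff: "is_clique n E k S \<longleftrightarrow> S \<subseteq> {..<n} \<and> card S = k \<and> two_subsets S \<subseteq> E"
  by (simp add: is_clique_def two_subsets_subset_iff)

lemma all_pairs_clique_linked_mono:
  assumes "all_pairs_clique_linked k n E" and "E \<subseteq> F"
  shows "all_pairs_clique_linked k n F"
  using assms unfolding all_pairs_clique_linked_def clique_linked_def by (meson order_trans)

lemma harmoniousD:
  "harmonious k n E f \<Longrightarrow> is_clique n E k S \<Longrightarrow> is_clique n E k T \<Longrightarrow> f ` S = f ` T \<Longrightarrow> S = T"
  unfolding harmonious_def by blast

lemma harmonious_separates_clique_linked:
  assumes "k \<ge> 1" and "harmonious k n E f" and "clique_linked k n E u v"
    and "u < n" "v < n" "u \<noteq> v"
  shows "f u \<noteq> f v"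
proof
  assume same_colour: "f u = f v"
  obtain W where W: "W \<subseteq> {..<n} - {u, v}" "card W = k - 1"
    and edges: "two_subsets (insert u (insert v W)) - {{u, v}} \<subseteq> E"
    using assms(3) by (auto simp: clique_linked_def)
  have "finite W" using W(1) by (rule finite_subset) simp
  have clique: "is_clique n E k (insert x W)" if x: "x = u \<or> x = v" for x
  proof -
    have "insert x W \<subseteq> insert u (insert v W)" using x by auto
    then have "two_subsets (insert x W) \<subseteq> two_subsets (insert u (insert v W))"
      by (rule two_subsets_mono)
    moreover have "{u, v} \<notin> two_subsets (insert x W)"
      using x W(1) assms(6) by (auto simp: two_subsets_def)
    ultimately have "two_subsets (insert x W) \<subseteq> two_subsets (insert u (insert v W)) - {{u, v}}"
      by blast
    then have "two_subsets (insert x W) \<subseteq> E" using edges by (rule order_trans)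
    moreover have "x \<notin> W" using x W(1) by auto
    then have "card (insert x W) = k" using W(2) \<open>finite W\<close> assms(1) by simp
    moreover have "insert x W \<subseteq> {..<n}" using x W(1) assms(4,5) by auto
    ultimately show ?thesis by (simp add: is_clique_iff)
  qed
  have "is_clique n E k (insert u W)" "is_clique n E k (insert v W)" using clique by simp_all
  moreover have "f ` insert u W = f ` insert v W" using same_colour by simp
  ultimately have "insert u W = insert v W" by (rule harmoniousD[OF assms(2)])
  moreover have "u \<notin> insert v W" using W(1) assms(6) by auto
  ultimately show False by (metis insertI1)
qed

lemma harmonious_if_inj:
  assumes "E \<subseteq> two_subsets {..<n}" and "inj_on f {..<n}"
  shows "proper_colouring n E f" and "harmonious k n E f"
proof -
  show "proper_colouring n E f"
    unfolding proper_colouring_def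
  proof (intro allI impI)
    fix u v assume "u < n" "v < n" "{u, v} \<in> E"
    then have "u \<noteq> v" using assms(1) by (auto simp: two_subsets_def)
    then show "f u \<noteq> f v" using assms(2) \<open>u < n\<close> \<open>v < n\<close> by (auto dest: inj_onD)
  qed
  show "harmonious k n E f"
    unfolding harmonious_def
  proof (intro allI impI)
    fix S T assume "is_clique n E k S \<and> is_clique n E k T \<and> f ` S = f ` T"
    then have "S \<subseteq> {..<n}" "T \<subseteq> {..<n}" "f ` S = f ` T" by (simp_all add: is_clique_def)
    then show "S = T" by (simp add: inj_on_image_eq_iff[OF assms(2)])
  qed
qed

lemma h_harm_all_pairs_clique_linked:
  assumes "k \<ge> 1" and "E \<subseteq> two_subsets {..<n}" and "all_pairs_clique_linked k n E"
  shows "h_harm k n E = (\<lambda>q. card {f \<in> {..<n} \<rightarrow>\<^sub>E {1..q}. inj_on f {..<n}})"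
proof
  fix q
  have "proper_colouring n E f \<and> harmonious k n E f \<longleftrightarrow> inj_on f {..<n}" for f
    using harmonious_separates_clique_linked[OF assms(1), of n E f] harmonious_if_inj[OF assms(2)]
      assms(3) by (auto simp: all_pairs_clique_linked_def inj_on_def)
  then show "h_harm k n E q = card {f \<in> {..<n} \<rightarrow>\<^sub>E {1..q}. inj_on f {..<n}}"
    by (simp add: h_harm_def)
qed

lemma clique_linked_relabel:
  assumes "p \<in> vertex_perms n" and "clique_linked k n E u v"
  shows "clique_linked k n (relabel p E) (p u) (p v)"
proof -
  have p: "p permutes {..<n}" using assms(1) by (simp add: vertex_perms_def)
  obtain W where W: "W \<subseteq> {..<n} - {u, v}" "card W = k - 1"
    and edges: "two_subsets (insert u (insert v W)) - {{u, v}} \<subseteq> E"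
    using assms(2) by (auto simp: clique_linked_def)
  have inj: "inj p" using p by (rule permutes_inj)
  have "p ` W \<subseteq> {..<n} - {p u, p v}"
    using W(1) permutes_image[OF p] inj by (auto simp: inj_eq)
  moreover have "card (p ` W) = k - 1" using W(2) inj by (simp add: card_image inj_on_subset)
  moreover have "two_subsets (insert (p u) (insert (p v) (p ` W))) - {{p u, p v}} \<subseteq> relabel p E"
  proof -
    have "relabel p (two_subsets (insert u (insert v W)) - {{u, v}}) \<subseteq> relabel p E"
      using edges by (rule relabel_mono)
    moreover have "relabel p (two_subsets (insert u (insert v W)) - {{u, v}}) =
        two_subsets (insert (p u) (insert (p v) (p ` W))) - {{p u, p v}}"
    proof -
      have "relabel p (two_subsets (insert u (insert v W)) - {{u, v}}) =
          relabel p (two_subsets (insert u (insert v W))) - relabel p {{u, v}}"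
        unfolding relabel_def by (rule image_set_diff[OF inj_image_vertex_perm[OF assms(1)]])
      also have "relabel p (two_subsets (insert u (insert v W))) =
          two_subsets (p ` insert u (insert v W))"
        by (rule relabel_two_subsets[OF inj_on_subset[OF inj subset_UNIV]])
      finally show ?thesis by (simp add: relabel_def)
    qed
    ultimately show ?thesis by simp
  qed
  ultimately show ?thesis by (auto simp: clique_linked_def)
qed

lemma all_pairs_clique_linked_complete_minus_edge:
  assumes "n \<ge> k + 3"
  shows "all_pairs_clique_linked k n (two_subsets {..<n} - {{0, 1}})"
  unfolding all_pairs_clique_linked_def clique_linked_def
proof (intro allI impI)
  fix u v assume "u < n" "v < n" "u \<noteq> v"
  have "card {u, v, 0, 1} \<le> 4" by (simp add: card_insert_if)
  then have "k - 1 \<le> card ({..<n} - {u, v, 0, 1})"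
    using assms diff_card_le_card_Diff[of "{u, v, 0, 1}" "{..<n}"] by simp
  then obtain W where W: "W \<subseteq> {..<n} - {u, v, 0, 1}" "card W = k - 1"
    by (meson obtain_subset_with_card_n)
  have "two_subsets (insert u (insert v W)) - {{u, v}} \<subseteq> two_subsets {..<n} - {{0, 1}}"
  proof
    fix e assume e: "e \<in> two_subsets (insert u (insert v W)) - {{u, v}}"
    then have "e \<in> two_subsets {..<n}"
      using two_subsets_mono[of "insert u (insert v W)" "{..<n}"] W(1) \<open>u < n\<close> \<open>v < n\<close> by blast
    moreover have "e \<noteq> {0, 1}"
    proof
      assume "e = {0, 1}"
      \<comment> \<open>0 and 1 avoid W, so e would have to be the excluded pair {u, v}\<close>
      then have "e \<subseteq> {u, v}" using e W(1) by (auto simp: two_subsets_def)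
      moreover have "card e = 2" "card {u, v} = 2" using e \<open>u \<noteq> v\<close> by (auto simp: two_subsets_def)
      ultimately have "e = {u, v}" by (simp add: card_subset_eq)
      then show False using e by simp
    qed
    ultimately show "e \<in> two_subsets {..<n} - {{0, 1}}" by simp
  qed
  then show "\<exists>W. W \<subseteq> {..<n} - {u, v} \<and> card W = k - 1 \<and>
      two_subsets (insert u (insert v W)) - {{u, v}} \<subseteq> two_subsets {..<n} - {{0, 1}}"
    using W by blast
qed

lemma not_unique_if_all_pairs_clique_linked:
  assumes "k \<ge> 1" and "n \<ge> k + 3" and E: "E \<subseteq> two_subsets {..<n}"
    and linked: "all_pairs_clique_linked k n E"
  shows "\<not> P_unique (h_harm k) n E"
proof
  assume unique: "P_unique (h_harm k) n E"
  define K where "K = two_subsets {..<n}"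
  define K' where "K' = K - {{0, 1}}"
  have K'_linked: "all_pairs_clique_linked k n K'"
    using all_pairs_clique_linked_complete_minus_edge[OF assms(2)] by (simp add: K'_def K_def)
  have K_linked: "all_pairs_clique_linked k n K"
    using all_pairs_clique_linked_mono[OF K'_linked] by (simp add: K'_def)
  have "card G = card E" if G: "G \<subseteq> K" "all_pairs_clique_linked k n G" for G
  proof -
    have "h_harm k n G = h_harm k n E"
      using h_harm_all_pairs_clique_linked[OF assms(1)] G E linked by (simp add: K_def)
    then have "iso_graph n E G" using unique G(1) by (simp add: P_unique_def graph_on_iff K_def)
    then have "G \<in> iso_class n E" using G(1) by (simp add: iso_class_def graph_on_iff K_def)
    then obtain p where "p \<in> vertex_perms n" "G = relabel p E"
      using iso_class_eq_relabellings[OF E] by auto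
    then show ?thesis by (simp add: card_relabel)
  qed
  then have "card K' = card K" using K_linked K'_linked by (simp add: K'_def)
  moreover have "{0, 1} \<in> K" using assms(2) by (simp add: K_def doubleton_in_two_subsets)
  ultimately show False
    using card_Diff1_less[of K "{0, 1}"] by (simp add: K'_def K_def finite_two_subsets)
qed

definition unlinked_graphs :: "nat \<Rightarrow> nat \<Rightarrow> nat set set set" where
  "unlinked_graphs k n = {E. E \<subseteq> two_subsets {..<n} \<and> \<not> all_pairs_clique_linked k n E}"

lemma relabel_unlinked_graphs:
  assumes "E \<in> unlinked_graphs k n" and p: "p \<in> vertex_perms n"
  shows "relabel p E \<in> unlinked_graphs k n"
proof -
  have "all_pairs_clique_linked k n E" if "all_pairs_clique_linked k n (relabel p E)"
    unfolding all_pairs_clique_linked_def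
  proof (intro allI impI)
    fix u v assume "u < n" "v < n" "u \<noteq> v"
    have perm: "p permutes {..<n}" using p by (simp add: vertex_perms_def)
    have "p u < n" "p v < n" using \<open>u < n\<close> \<open>v < n\<close> permutes_in_image[OF perm] by simp_all
    moreover have "p u \<noteq> p v" using \<open>u \<noteq> v\<close> permutes_inj[OF perm] by (simp add: inj_eq)
    ultimately have "clique_linked k n (relabel p E) (p u) (p v)"
      using that by (simp add: all_pairs_clique_linked_def)
    from clique_linked_relabel[OF inv_in_vertex_perms[OF p] this]
    show "clique_linked k n E u v"
      by (simp add: relabel_inv_relabel[OF p] permutes_inverses(2)[OF perm])
  qed
  then show ?thesis using assms relabel_graph[OF p] by (auto simp: unlinked_graphs_def)
qed

lemma unique_classes_subset_unlinked:
  assumes "k \<ge> 1" and "n \<ge> k + 3"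
  shows "unique_classes (h_harm k) n \<subseteq> iso_class n ` unlinked_graphs k n"
proof
  fix C assume "C \<in> unique_classes (h_harm k) n"
  then obtain E where "E \<subseteq> two_subsets {..<n}" "P_unique (h_harm k) n E" "C = iso_class n E"
    by (auto simp: unique_classes_def graph_on_iff)
  then show "C \<in> iso_class n ` unlinked_graphs k n"
    using not_unique_if_all_pairs_clique_linked[OF assms] by (auto simp: unlinked_graphs_def)
qed

section \<open>Almost all graphs are clique-linked\<close>

lemma card_avoiding_blocks_containing:
  assumes U: "finite U" and T: "T \<subseteq> U" and disj: "\<And>i. i < m \<Longrightarrow> S i \<inter> T = {}"
  defines "A \<equiv> {E. E \<subseteq> U \<and> (\<forall>i<m. \<not> S i \<subseteq> E)}"
  shows "card {E \<in> A. T \<subseteq> E} * 2 ^ card T = card A"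
proof -
  let ?B = "{E \<in> A. T \<subseteq> E}"
  \<comment> \<open>membership in A does not depend on the part of E inside T\<close>
  have A_iff: "E - T \<union> R \<in> A \<longleftrightarrow> E \<in> A" if "E \<subseteq> U" "R \<subseteq> T" for E R
  proof -
    have "S i \<subseteq> E - T \<union> R \<longleftrightarrow> S i \<subseteq> E" if "i < m" for i
      using disj[OF that] \<open>R \<subseteq> T\<close> by blast
    then show ?thesis using that T by (auto simp: A_def)
  qed
  define f where "f = (\<lambda>(E, R). E - T \<union> (R :: 'a set))"
  have "bij_betw f (?B \<times> Pow T) A"
  proof (rule bij_betw_byWitness[where f' = "\<lambda>E. (E \<union> T, E \<inter> T)"])
    show "\<forall>x\<in>?B \<times> Pow T. (\<lambda>E. (E \<union> T, E \<inter> T)) (f x) = x" by (auto simp: f_def)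
    show "\<forall>E\<in>A. f (E \<union> T, E \<inter> T) = E" by (auto simp: f_def)
    show "f ` (?B \<times> Pow T) \<subseteq> A"
      using A_iff by (auto simp: f_def A_def)
    show "(\<lambda>E. (E \<union> T, E \<inter> T)) ` A \<subseteq> ?B \<times> Pow T"
    proof (rule image_subsetI)
      fix E assume "E \<in> A"
      then have "E - T \<union> T \<in> A" using A_iff[of E T] by (simp add: A_def)
      then have "E \<union> T \<in> A" by (simp add: Un_Diff_cancel2)
      then show "(E \<union> T, E \<inter> T) \<in> ?B \<times> Pow T" by simp
    qed
  qed
  then have "card A = card (?B \<times> Pow T)" by (simp add: bij_betw_same_card)
  also have "\<dots> = card ?B * 2 ^ card T"
    using T U by (simp add: card_cartesian_product card_Pow finite_subset)
  finally show ?thesis by simp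
qed

lemma card_avoiding_disjoint_blocks:
  assumes U: "finite U"
    and S: "\<And>i. i < m \<Longrightarrow> S i \<subseteq> U" "\<And>i. i < m \<Longrightarrow> card (S i) = s"
    and disj: "\<And>i j. i < m \<Longrightarrow> j < m \<Longrightarrow> i \<noteq> j \<Longrightarrow> S i \<inter> S j = {}"
  shows "real (card {E. E \<subseteq> U \<and> (\<forall>i<m. \<not> S i \<subseteq> E)}) = 2 ^ card U * (1 - 1 / 2 ^ s) ^ m"
  using S disj
proof (induction m)
  case 0
  have "{E. E \<subseteq> U \<and> (\<forall>i<0. \<not> S i \<subseteq> E)} = Pow U" by auto
  then show ?case using U by (simp add: card_Pow)
next
  case (Suc m)
  define A where "A = {E. E \<subseteq> U \<and> (\<forall>i<m. \<not> S i \<subseteq> E)}"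
  have IH: "real (card A) = 2 ^ card U * (1 - 1 / 2 ^ s) ^ m"
    unfolding A_def using Suc.prems by (intro Suc.IH) auto
  have "finite A" unfolding A_def by (rule finite_subset[of _ "Pow U"]) (auto simp: U)
  have "card {E \<in> A. S m \<subseteq> E} * 2 ^ s = card A"
    using card_avoiding_blocks_containing[OF U, of "S m" m S] Suc.prems by (simp add: A_def)
  then have "real (card {E \<in> A. S m \<subseteq> E}) * 2 ^ s = real (card A)"
    by (metis of_nat_mult of_nat_numeral of_nat_power)
  then have containing: "real (card {E \<in> A. S m \<subseteq> E}) = real (card A) / 2 ^ s"
    by (simp add: eq_divide_eq)
  have "{E. E \<subseteq> U \<and> (\<forall>i<Suc m. \<not> S i \<subseteq> E)} = A - {E \<in> A. S m \<subseteq> E}"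
    unfolding A_def using less_Suc_eq by auto
  then have "real (card {E. E \<subseteq> U \<and> (\<forall>i<Suc m. \<not> S i \<subseteq> E)}) =
      real (card A) - real (card {E \<in> A. S m \<subseteq> E})"
    using \<open>finite A\<close> by (simp add: card_Diff_subset of_nat_diff card_mono)
  also have "\<dots> = real (card A) * (1 - 1 / 2 ^ s)" by (simp add: containing algebra_simps)
  finally show ?case by (simp add: IH)
qed

lemma obtain_disjoint_blocks:
  assumes "finite M" and "m * K \<le> card M"
  obtains B where "\<And>i. i < m \<Longrightarrow> B i \<subseteq> M" "\<And>i. i < m \<Longrightarrow> card (B i) = K"
    and "\<And>i j. i < m \<Longrightarrow> j < m \<Longrightarrow> i \<noteq> j \<Longrightarrow> B i \<inter> B j = {}"
  using assms
proof (induction m arbitrary: M thesis)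
  case 0
  then show ?case by blast
next
  case (Suc m)
  obtain C where C: "C \<subseteq> M" "card C = K"
    using Suc.prems(3) obtain_subset_with_card_n[of K M] by auto
  have "m * K \<le> card (M - C)"
    using Suc.prems(2,3) C by (simp add: card_Diff_subset finite_subset)
  then obtain B where B: "\<And>i. i < m \<Longrightarrow> B i \<subseteq> M - C" "\<And>i. i < m \<Longrightarrow> card (B i) = K"
    and disj: "\<And>i j. i < m \<Longrightarrow> j < m \<Longrightarrow> i \<noteq> j \<Longrightarrow> B i \<inter> B j = {}"
    using Suc.IH[of "M - C"] Suc.prems(2) by blast
  show ?case
  proof (rule Suc.prems(1)[of "B(m := C)"])
    fix i assume "i < Suc m"
    then show "(B(m := C)) i \<subseteq> M" "card ((B(m := C)) i) = K" using B C by (auto simp: less_Suc_eq)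
  next
    fix i j assume "i < Suc m" "j < Suc m" "i \<noteq> j"
    then show "(B(m := C)) i \<inter> (B(m := C)) j = {}" using B(1) disj by (fastforce simp: less_Suc_eq)
  qed
qed

lemma card_two_subsets_minus_pair:
  assumes "finite B" "u \<notin> B" "v \<notin> B" "u \<noteq> v"
  shows "card (two_subsets (insert u (insert v B)) - {{u, v}}) = (card B + 2 choose 2) - 1"
proof -
  have "card (insert u (insert v B)) = card B + 2" using assms by simp
  moreover have "{u, v} \<in> two_subsets (insert u (insert v B))"
    using assms(4) by (simp add: doubleton_in_two_subsets)
  ultimately show ?thesis using assms(1) by (simp add: card_two_subsets finite_two_subsets)
qed

lemma card_not_clique_linked_le:
  assumes "u < n" "v < n" "u \<noteq> v"
  shows "real (card {E. E \<subseteq> two_subsets {..<n} \<and> \<not> clique_linked k n E u v})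
    \<le> 2 ^ card (two_subsets {..<n}) * (1 - 1 / 2 ^ ((k + 1 choose 2) - 1)) ^ ((n - 2) div (k - 1))"
proof -
  define M where "M = {..<n} - {u, v}"
  define m where "m = (n - 2) div (k - 1)"
  have "card M = n - 2" using assms by (simp add: M_def card_Diff_subset)
  then have "m * (k - 1) \<le> card M" by (simp add: m_def div_times_less_eq_dividend)
  then obtain B where B: "\<And>i. i < m \<Longrightarrow> B i \<subseteq> M" "\<And>i. i < m \<Longrightarrow> card (B i) = k - 1"
    and B_disj: "\<And>i j. i < m \<Longrightarrow> j < m \<Longrightarrow> i \<noteq> j \<Longrightarrow> B i \<inter> B j = {}"
    using obtain_disjoint_blocks[of M m "k - 1"] by (auto simp: M_def)
  \<comment> \<open>if E contains one of the edge sets S i, then B i witnesses that u and v are clique-linked\<close>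
  define S where "S i = two_subsets (insert u (insert v (B i))) - {{u, v}}" for i
  have S_sub: "S i \<subseteq> two_subsets {..<n}" if "i < m" for i
    using B(1)[OF that] assms two_subsets_mono[of "insert u (insert v (B i))" "{..<n}"]
    by (auto simp: S_def M_def)
  have S_card: "card (S i) = (k + 1 choose 2) - 1" if "i < m" for i
  proof -
    have "k - 1 > 0" using that unfolding m_def by (metis div_by_0 gr0I not_less0)
    moreover have "u \<notin> B i" "v \<notin> B i" using B(1)[OF that] by (auto simp: M_def)
    moreover have "finite (B i)" using B(1)[OF that] by (rule finite_subset) (simp add: M_def)
    ultimately show ?thesis
      using card_two_subsets_minus_pair[of "B i" u v] B(2)[OF that] assms(3) by (simp add: S_def)
  qed
  have S_disj: "S i \<inter> S j = {}" if "i < m" "j < m" "i \<noteq> j" for i j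
  proof (rule ccontr)
    assume "S i \<inter> S j \<noteq> {}"
    then obtain e where e: "e \<in> S i" "e \<in> S j" by blast
    then have "e \<subseteq> {u, v}" using B_disj[OF that] by (auto simp: S_def two_subsets_def)
    moreover have "card e = 2" using e by (simp add: S_def two_subsets_def)
    ultimately have "e = {u, v}" using assms(3) by (simp add: card_subset_eq)
    then show False using e by (simp add: S_def)
  qed
  have "{E. E \<subseteq> two_subsets {..<n} \<and> \<not> clique_linked k n E u v}
      \<subseteq> {E. E \<subseteq> two_subsets {..<n} \<and> (\<forall>i<m. \<not> S i \<subseteq> E)}"
    using B by (auto simp: clique_linked_def S_def M_def)
  then have "card {E. E \<subseteq> two_subsets {..<n} \<and> \<not> clique_linked k n E u v}
      \<le> card {E. E \<subseteq> two_subsets {..<n} \<and> (\<forall>i<m. \<not> S i \<subseteq> E)}"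
    by (rule card_mono[rotated]) (simp add: finite_two_subsets)
  also have "real \<dots> = 2 ^ card (two_subsets {..<n}) * (1 - 1 / 2 ^ ((k + 1 choose 2) - 1)) ^ m"
    using S_sub S_card S_disj by (intro card_avoiding_disjoint_blocks) (simp_all add: finite_two_subsets)
  finally show ?thesis by (simp add: m_def)
qed

lemma card_unlinked_graphs_le:
  "real (card (unlinked_graphs k n)) \<le> real n ^ 2 *
    (2 ^ card (two_subsets {..<n}) * (1 - 1 / 2 ^ ((k + 1 choose 2) - 1)) ^ ((n - 2) div (k - 1)))"
  (is "_ \<le> _ * ?b")
proof -
  define J where "J = {(u, v). u < n \<and> v < n \<and> u \<noteq> v}"
  define bad where "bad = (\<lambda>(u, v). {E. E \<subseteq> two_subsets {..<n} \<and> \<not> clique_linked k n E u v})"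
  have "J \<subseteq> {..<n} \<times> {..<n}" by (auto simp: J_def)
  then have "finite J" and "card J \<le> n ^ 2"
    using card_mono[of "{..<n} \<times> {..<n}" J] finite_subset
    by (auto simp: card_cartesian_product power2_eq_square)
  have "unlinked_graphs k n \<subseteq> (\<Union>x\<in>J. bad x)"
    by (auto simp: unlinked_graphs_def all_pairs_clique_linked_def J_def bad_def)
  moreover have "finite (bad x)" for x
    by (rule finite_subset[of _ "Pow (two_subsets {..<n})"]) (auto simp: bad_def finite_two_subsets split: prod.split)
  ultimately have "card (unlinked_graphs k n) \<le> card (\<Union>x\<in>J. bad x)"
    using \<open>finite J\<close> by (intro card_mono) auto
  also have "\<dots> \<le> (\<Sum>x\<in>J. card (bad x))" by (rule card_UN_le[OF \<open>finite J\<close>])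
  finally have "real (card (unlinked_graphs k n)) \<le> (\<Sum>x\<in>J. real (card (bad x)))"
    by (simp flip: of_nat_sum)
  also have "\<dots> \<le> (\<Sum>x\<in>J. ?b)"
    using card_not_clique_linked_le by (intro sum_mono) (auto simp: J_def bad_def)
  also have "\<dots> \<le> real n ^ 2 * ?b"
    using \<open>card J \<le> n ^ 2\<close> by (simp, intro mult_right_mono) (auto simp flip: of_nat_power)
  finally show ?thesis .
qed

lemma unlinked_graphs_eq_empty:
  assumes "k \<le> 1"
  shows "unlinked_graphs k n = {}"
proof -
  have "clique_linked k n E u v" if "u \<noteq> v" for E u v
  proof -
    have "two_subsets {u, v} \<subseteq> {{u, v}}"
    proof
      fix e assume "e \<in> two_subsets {u, v}"
      then have "e = {u, v}" using that by (intro card_subset_eq) (auto simp: two_subsets_def)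
      then show "e \<in> {{u, v}}" by simp
    qed
    then show ?thesis using assms unfolding clique_linked_def by (intro exI[of _ "{}"]) auto
  qed
  then show ?thesis by (auto simp: unlinked_graphs_def all_pairs_clique_linked_def)
qed

lemma real_divide_minus_one_less_div: "real a / real b - 1 < real (a div b)"
proof -
  have "real (a div b) = of_int \<lfloor>real a / real b\<rfloor>"
    by (metis floor_divide_of_nat_eq of_int_of_nat_eq)
  then show ?thesis using real_of_int_floor_gt_diff_one[of "real a / real b"] by simp
qed

lemma unlinked_graphs_negligible:
  "(\<lambda>n. real (card (unlinked_graphs k n)) / 2 ^ card (two_subsets {..<n})) \<longlonglongrightarrow> 0"
proof (cases "k \<le> 1")
  case True
  then show ?thesis by (simp add: unlinked_graphs_eq_empty)
next
  case False
  define K where "K = k - 1"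
  define d :: real where "d = 1 / 2 ^ ((k + 1 choose 2) - 1)"
  have "K > 0" using False by (simp add: K_def)
  have "d > 0" "d \<le> 1" by (simp_all add: d_def)
  have bound: "real (card (unlinked_graphs k n)) / 2 ^ card (two_subsets {..<n})
      \<le> real n ^ 2 * exp (- d * ((real n - 2) / real K - 1))" for n
  proof -
    define m where "m = (n - 2) div K"
    have "real n - 2 \<le> real (n - 2)" by (cases "n \<ge> 2") (auto simp: of_nat_diff)
    then have "(real n - 2) / real K \<le> real (n - 2) / real K" by (simp add: divide_right_mono)
    then have "(real n - 2) / real K - 1 \<le> real m"
      using real_divide_minus_one_less_div[of "n - 2" K] by (simp add: m_def)
    have "(1 - d) ^ m \<le> exp (- d) ^ m"
      using \<open>d \<le> 1\<close> by (intro power_mono) (simp_all add: exp_ge_add_one_self[of "- d", simplified])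
    also have "\<dots> = exp (- d * real m)" by (simp add: exp_of_nat_mult[symmetric] mult.commute)
    also have "\<dots> \<le> exp (- d * ((real n - 2) / real K - 1))"
      using \<open>(real n - 2) / real K - 1 \<le> real m\<close> \<open>d > 0\<close> by simp
    finally have "real n ^ 2 * (1 - d) ^ m \<le> real n ^ 2 * exp (- d * ((real n - 2) / real K - 1))"
      by (simp add: mult_left_mono)
    moreover have "real (card (unlinked_graphs k n)) \<le> real n ^ 2 * (1 - d) ^ m * 2 ^ card (two_subsets {..<n})"
      using card_unlinked_graphs_le[of k n] by (simp add: d_def m_def K_def mult_ac)
    then have "real (card (unlinked_graphs k n)) / 2 ^ card (two_subsets {..<n}) \<le> real n ^ 2 * (1 - d) ^ m"
      by (simp add: pos_divide_le_eq)
    ultimately show ?thesis by linarith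
  qed
  have "(\<lambda>n. real n ^ 2 * exp (- d * ((real n - 2) / real K - 1))) \<longlonglongrightarrow> 0"
    using \<open>d > 0\<close> \<open>K > 0\<close> by real_asymp
  then show ?thesis
    by (rule tendsto_sandwich[rotated 2, OF tendsto_const]) (use bound in \<open>simp_all\<close>)
qed

section \<open>Almost no graph has a nontrivial automorphism\<close>

lemma card_invariant_subsets_le:
  assumes "finite U" and "inj_on \<sigma> U" and "\<sigma> ` U \<subseteq> U"
    and "D \<subseteq> U" and moved_out: "\<And>e. e \<in> D \<Longrightarrow> \<sigma> e \<notin> D"
  shows "card {E. E \<subseteq> U \<and> \<sigma> ` E = E} \<le> 2 ^ (card U - card D)"
proof -
  let ?X = "{E. E \<subseteq> U \<and> \<sigma> ` E = E}"
  have invariant: "e \<in> E \<longleftrightarrow> \<sigma> e \<in> E" if E: "E \<in> ?X" and e: "e \<in> U" for E e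
  proof
    assume "e \<in> E"
    then have "\<sigma> e \<in> \<sigma> ` E" by (rule imageI)
    then show "\<sigma> e \<in> E" using E by simp
  next
    assume "\<sigma> e \<in> E"
    then have "\<sigma> e \<in> \<sigma> ` E" using E by simp
    then obtain e' where "e' \<in> E" "\<sigma> e = \<sigma> e'" by (auto simp del: mem_Collect_eq)
    moreover have "e' \<in> U" using E \<open>e' \<in> E\<close> by auto
    ultimately show "e \<in> E" using inj_onD[OF assms(2) _ e] by metis
  qed
  \<comment> \<open>an invariant set is determined by its part outside D, since \<sigma> maps D out of D\<close>
  have "inj_on (\<lambda>E. E - D) ?X"
  proof (rule inj_onI, rule set_eqI)
    fix E1 E2 e assume E: "E1 \<in> ?X" "E2 \<in> ?X" and eq: "E1 - D = E2 - D"
    show "e \<in> E1 \<longleftrightarrow> e \<in> E2"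
    proof (cases "e \<in> D")
      case True
      then have "e \<in> U" "\<sigma> e \<notin> D" using assms(4) moved_out by auto
      have "e \<in> E1 \<longleftrightarrow> \<sigma> e \<in> E1 - D" using invariant[OF E(1) \<open>e \<in> U\<close>] \<open>\<sigma> e \<notin> D\<close> by simp
      also have "\<dots> \<longleftrightarrow> e \<in> E2" using invariant[OF E(2) \<open>e \<in> U\<close>] \<open>\<sigma> e \<notin> D\<close> eq by simp
      finally show ?thesis .
    next
      case False
      then show ?thesis using eq by (metis Diff_iff)
    qed
  qed
  then have "card ?X = card ((\<lambda>E. E - D) ` ?X)" by (simp add: card_image)
  also have "\<dots> \<le> card (Pow (U - D))" by (rule card_mono) (use assms(1) in auto)
  also have "\<dots> = 2 ^ (card U - card D)"
    using assms(1,4) by (simp add: card_Pow card_Diff_subset finite_subset)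
  finally show ?thesis .
qed

lemma obtain_subset_disjoint_from_image:
  assumes p: "p permutes T" and "finite T"
  obtains A where "A \<subseteq> {x. p x \<noteq> x}" "A \<inter> p ` A = {}" "card {x. p x \<noteq> x} \<le> 3 * card A"
proof -
  let ?S = "{x. p x \<noteq> x}"
  let ?C = "{A. A \<subseteq> ?S \<and> A \<inter> p ` A = {}}"
  have "finite ?S" using p \<open>finite T\<close> by (auto simp: permutes_altdef intro: finite_subset)
  \<comment> \<open>take A of maximal size: a moved point outside A, p ` A and inv p ` A could be added to it\<close>
  have "\<forall>B. B \<in> ?C \<longrightarrow> card B < Suc (card ?S)"
  proof (intro allI impI)
    fix B assume "B \<in> ?C"
    then have "card B \<le> card ?S" by (intro card_mono[OF \<open>finite ?S\<close>]) simp
    then show "card B < Suc (card ?S)" by simp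
  qed
  moreover have "{} \<in> ?C" by simp
  ultimately have "\<exists>A. A \<in> ?C \<and> (\<forall>B. B \<in> ?C \<longrightarrow> card B \<le> card A)"
    by (rule Lattices_Big.ex_has_greatest_nat[rotated])
  then obtain A where A: "A \<in> ?C" and max: "\<forall>B. B \<in> ?C \<longrightarrow> card B \<le> card A"
    by (elim exE conjE)
  have "finite A" using A \<open>finite ?S\<close> by (auto intro: finite_subset)
  have "?S \<subseteq> A \<union> p ` A \<union> inv p ` A"
  proof
    fix y assume y: "y \<in> ?S"
    show "y \<in> A \<union> p ` A \<union> inv p ` A"
    proof (rule ccontr)
      assume y_out: "y \<notin> A \<union> p ` A \<union> inv p ` A"
      have "p y \<notin> A"
      proof
        assume "p y \<in> A"
        then have "inv p (p y) \<in> inv p ` A" by (rule imageI)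
        then show False using y_out permutes_inverses(2)[OF p] by simp
      qed
      then have "insert y A \<in> ?C" using A y y_out by auto
      then have "card (insert y A) \<le> card A" by (rule max[rule_format])
      then show False using \<open>finite A\<close> y_out by simp
    qed
  qed
  then have "card ?S \<le> card (A \<union> p ` A \<union> inv p ` A)"
    using \<open>finite A\<close> by (intro card_mono) auto
  also have "\<dots> \<le> card A + card (p ` A) + card (inv p ` A)"
    using card_Un_le[of "A \<union> p ` A" "inv p ` A"] card_Un_le[of A "p ` A"] by linarith
  also have "\<dots> \<le> 3 * card A"
    using card_image_le[OF \<open>finite A\<close>, of p] card_image_le[OF \<open>finite A\<close>, of "inv p"] by linarith
  finally show ?thesis using that A by blast
qed

lemma obtain_edges_moved_out:
  assumes p: "p permutes {..<n}" and A: "A \<subseteq> {..<n}" "A \<inter> p ` A = {}"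
  obtains D where "D \<subseteq> two_subsets {..<n}" "\<And>e. e \<in> D \<Longrightarrow> p ` e \<notin> D"
    and "card A * (n - 2 * card A) \<le> card D"
proof -
  define X where "X = {..<n} - (A \<union> p ` A)"
  define D where "D = (\<lambda>(a, x). {a, x}) ` (A \<times> X)"
  have "finite A" using A(1) by (rule finite_subset) simp
  have "D \<subseteq> two_subsets {..<n}"
    using A(1) by (auto simp: D_def X_def intro!: doubleton_in_two_subsets)
  moreover have "p ` e \<notin> D" if "e \<in> D" for e
  proof
    assume "p ` e \<in> D"
    obtain a x where "a \<in> A" "e = {a, x}" using \<open>e \<in> D\<close> by (auto simp: D_def)
    obtain a' x' where "a' \<in> A" "x' \<in> X" "p ` e = {a', x'}" using \<open>p ` e \<in> D\<close> by (auto simp: D_def)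
    \<comment> \<open>p a lies in p ` A, which meets neither A nor X\<close>
    then have "p a \<in> {a', x'}" using \<open>e = {a, x}\<close> by auto
    moreover have "p a \<in> p ` A" using \<open>a \<in> A\<close> by (rule imageI)
    ultimately show False using A(2) \<open>a' \<in> A\<close> \<open>x' \<in> X\<close> by (auto simp: X_def)
  qed
  moreover have "card A * (n - 2 * card A) \<le> card D"
  proof -
    have "inj_on (\<lambda>(a, x). {a, x}) (A \<times> X)"
      by (rule inj_onI) (auto simp: X_def doubleton_eq_iff)
    then have "card D = card A * card X" by (simp add: D_def card_image card_cartesian_product)
    moreover have "card (A \<union> p ` A) \<le> 2 * card A"
      using card_Un_le[of A "p ` A"] card_image_le[OF \<open>finite A\<close>, of p] by linarith
    then have "n - 2 * card A \<le> card X"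
      using diff_card_le_card_Diff[of "A \<union> p ` A" "{..<n}"] \<open>finite A\<close> by (simp add: X_def)
    ultimately show ?thesis by simp
  qed
  ultimately show ?thesis using that by blast
qed

lemma obtain_many_edges_moved_out:
  assumes perm: "p permutes {..<n}"
  obtains D where "D \<subseteq> two_subsets {..<n}" "\<And>e. e \<in> D \<Longrightarrow> p ` e \<notin> D"
    and "real (card {x. p x \<noteq> x}) * (real n - 3) / 8 \<le> real (card D)"
proof -
  define s where "s = card {x. p x \<noteq> x}"
  have "{x. p x \<noteq> x} \<subseteq> {..<n}" using perm by (simp add: permutes_altdef)
  then have "s \<le> n" unfolding s_def using card_mono[of "{..<n}"] by fastforce
  obtain A where A: "A \<subseteq> {x. p x \<noteq> x}" "A \<inter> p ` A = {}" "s \<le> 3 * card A"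
    using obtain_subset_disjoint_from_image[OF perm] unfolding s_def by auto
  \<comment> \<open>only up to n/4 points of A are used, so that enough vertices remain outside\<close>
  define t where "t = min (card A) (n div 4)"
  obtain A' where A': "A' \<subseteq> A" "card A' = t"
    using obtain_subset_with_card_n[of t A] by (auto simp: t_def)
  have "A' \<subseteq> {..<n}" using A'(1) A(1) \<open>{x. p x \<noteq> x} \<subseteq> {..<n}\<close> by blast
  moreover have "A' \<inter> p ` A' = {}" using A(2) A'(1) image_mono[OF A'(1), of p] by blast
  ultimately obtain D where D: "D \<subseteq> two_subsets {..<n}" "\<And>e. e \<in> D \<Longrightarrow> p ` e \<notin> D"
    and card_D: "t * (n - 2 * t) \<le> card D"
    using obtain_edges_moved_out[OF perm] A'(2) by metis
  have "real t * (real n / 2) \<le> real (card D)"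
  proof -
    have "4 * t \<le> n" by (simp add: t_def)
    then have "real t * (real n / 2) \<le> real t * (real n - 2 * real t)"
      by (intro mult_left_mono) linarith+
    also have "\<dots> = real (t * (n - 2 * t))" using \<open>4 * t \<le> n\<close> by (simp add: of_nat_diff)
    finally show ?thesis using card_D by linarith
  qed
  moreover have "real s * (real n - 3) \<le> 4 * (real t * real n)"
  proof (cases "t = card A")
    case True
    have "real s * (real n - 3) \<le> real s * real n" by (intro mult_left_mono) auto
    also have "\<dots> \<le> (3 * real t) * real n" using A(3) True by (intro mult_right_mono) auto
    finally have "real s * (real n - 3) \<le> 3 * (real t * real n)" by (simp add: mult.assoc)
    moreover have "0 \<le> real t * real n" by simp
    ultimately show ?thesis by linarith
  next
    case False
    then have "t = n div 4" by (simp add: t_def min_def split: if_splits)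
    then have "real n - 3 \<le> 4 * real t" by linarith
    then have "real s * (real n - 3) \<le> real s * (4 * real t)" by (intro mult_left_mono) auto
    also have "\<dots> \<le> real n * (4 * real t)" using \<open>s \<le> n\<close> by (intro mult_right_mono) auto
    finally show ?thesis by (simp add: mult_ac)
  qed
  ultimately have "real s * (real n - 3) / 8 \<le> real (card D)" by linarith
  then show ?thesis using that D unfolding s_def by blast
qed

lemma card_fixed_graphs_le:
  assumes p: "p \<in> vertex_perms n"
  shows "real (card (fixed_graphs n p))
    \<le> 2 ^ card (two_subsets {..<n}) * (2 powr (- (real n - 3) / 8)) ^ card {x. p x \<noteq> x}"
proof -
  define s where "s = card {x. p x \<noteq> x}"
  obtain D where D: "D \<subseteq> two_subsets {..<n}" "\<And>e. e \<in> D \<Longrightarrow> p ` e \<notin> D"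
    and card_D: "real s * (real n - 3) / 8 \<le> real (card D)"
    using obtain_many_edges_moved_out p unfolding s_def vertex_perms_def by blast
  have "card (fixed_graphs n p) \<le> 2 ^ (card (two_subsets {..<n}) - card D)"
    unfolding fixed_graphs_def relabel_def
  proof (rule card_invariant_subsets_le[OF finite_two_subsets _ _ D])
    show "inj_on (\<lambda>e. p ` e) (two_subsets {..<n})"
      using inj_image_vertex_perm[OF p] by (rule inj_on_subset) simp
    show "(\<lambda>e. p ` e) ` two_subsets {..<n} \<subseteq> two_subsets {..<n}"
      using relabel_graph[OF p order_refl] by (simp add: relabel_def)
  qed simp
  then have "real (card (fixed_graphs n p)) \<le> 2 ^ (card (two_subsets {..<n}) - card D)"
    by (metis of_nat_le_iff of_nat_numeral of_nat_power)
  also have "\<dots> = 2 ^ card (two_subsets {..<n}) * 2 powr (- real (card D))"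
    using card_mono[OF finite_two_subsets D(1)]
    by (simp add: power_diff powr_minus divide_inverse powr_realpow)
  also have "\<dots> \<le> 2 ^ card (two_subsets {..<n}) * 2 powr (- (real s * (real n - 3) / 8))"
    using card_D by simp
  also have "2 powr (- (real s * (real n - 3) / 8)) = (2 powr (- (real n - 3) / 8)) ^ s"
  proof -
    have "(2 powr (- (real n - 3) / 8)) ^ s = (2 powr (- (real n - 3) / 8)) powr real s"
      by (simp add: powr_realpow)
    also have "\<dots> = 2 powr (- (real s * (real n - 3) / 8))"
      unfolding powr_powr by (rule arg_cong[where f = "(powr) 2"]) (simp add: field_simps)
    finally show ?thesis by simp
  qed
  finally show ?thesis by (simp add: s_def)
qed

lemma inj_on_restrict_vertex_perms: "inj_on (\<lambda>p. restrict p {..<n}) (vertex_perms n)"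
proof (rule inj_onI, rule ext)
  fix p q x assume "p \<in> vertex_perms n" "q \<in> vertex_perms n" "restrict p {..<n} = restrict q {..<n}"
  then show "p x = q x"
    by (cases "x < n") (auto simp: vertex_perms_def permutes_not_in dest: fun_cong[of _ _ x])
qed

lemma sum_PiE_moved_weight:
  fixes r :: real
  shows "(\<Sum>g\<in>{..<n} \<rightarrow>\<^sub>E {..<n}. \<Prod>x<n. if g x = x then 1 else r) = (1 + (real n - 1) * r) ^ n"
proof -
  have "(\<Sum>a<n. if a = x then 1 else r) = 1 + (real n - 1) * r" if "x < n" for x
  proof -
    have "(\<Sum>a<n. if a = x then 1 else r) = (\<Sum>a<n. r + (if a = x then 1 - r else 0))"
      by (intro sum.cong) auto
    also have "\<dots> = 1 + (real n - 1) * r" using that by (simp add: sum.distrib algebra_simps)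
    finally show ?thesis .
  qed
  then have "(\<Prod>x<n. \<Sum>a<n. if a = x then 1 else r) = (1 + (real n - 1) * r) ^ n" by simp
  moreover have "(\<Sum>g\<in>{..<n} \<rightarrow>\<^sub>E {..<n}. \<Prod>x<n. if g x = x then 1 else r) =
      (\<Prod>x<n. \<Sum>a<n. if a = x then 1 else r)"
    by (rule prod_sum_PiE[symmetric]) auto
  ultimately show ?thesis by simp
qed

lemma sum_vertex_perms_power_card_moved_le:
  fixes r :: real
  assumes "r \<ge> 0"
  shows "(\<Sum>p\<in>vertex_perms n - {id}. r ^ card {x. p x \<noteq> x}) \<le> (1 + (real n - 1) * r) ^ n - 1"
proof -
  \<comment> \<open>weigh every map on {..<n} by r per moved point; permutations are among these maps\<close>
  define w where "w g = (\<Prod>x<n. if g x = x then 1 else r)" for g :: "nat \<Rightarrow> nat"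
  define F where "F = {..<n} \<rightarrow>\<^sub>E {..<n}"
  have w_nonneg: "w g \<ge> 0" for g unfolding w_def using assms by (intro prod_nonneg) auto
  have w_perm: "r ^ card {x. p x \<noteq> x} = w (restrict p {..<n})" if "p \<in> vertex_perms n" for p
  proof -
    have "{x. p x \<noteq> x} = {x \<in> {..<n}. p x \<noteq> x}"
      using that by (auto simp: vertex_perms_def permutes_altdef)
    then have "r ^ card {x. p x \<noteq> x} = (\<Prod>x\<in>{x \<in> {..<n}. p x \<noteq> x}. r)" by simp
    also have "\<dots> = (\<Prod>x<n. if p x \<noteq> x then r else 1)" by (rule prod.inter_filter) simp
    also have "\<dots> = w (restrict p {..<n})" by (auto simp: w_def intro!: prod.cong)
    finally show ?thesis .
  qed
  have "restrict p {..<n} \<in> F - {restrict id {..<n}}" if "p \<in> vertex_perms n - {id}" for p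
  proof -
    have p: "p permutes {..<n}" "p \<noteq> id" using that by (auto simp: vertex_perms_def)
    have "restrict p {..<n} \<in> F" using permutes_in_image[OF p(1)] by (auto simp: F_def)
    moreover have "restrict p {..<n} \<noteq> restrict id {..<n}"
      using p(2) inj_onD[OF inj_on_restrict_vertex_perms _ _ id_in_vertex_perms] that by auto
    ultimately show ?thesis by simp
  qed
  then have restrict_in: "(\<lambda>p. restrict p {..<n}) ` (vertex_perms n - {id}) \<subseteq> F - {restrict id {..<n}}"
    by (rule image_subsetI)
  have "(\<Sum>p\<in>vertex_perms n - {id}. r ^ card {x. p x \<noteq> x}) =
      (\<Sum>g\<in>(\<lambda>p. restrict p {..<n}) ` (vertex_perms n - {id}). w g)"
    using w_perm by (subst sum.reindex) (auto intro: inj_on_subset[OF inj_on_restrict_vertex_perms])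
  also have "\<dots> \<le> (\<Sum>g\<in>F - {restrict id {..<n}}. w g)"
    using restrict_in w_nonneg by (intro sum_mono2) (simp_all add: F_def finite_PiE)
  also have "\<dots> = (\<Sum>g\<in>F. w g) - 1"
    by (subst sum_diff1) (auto simp: F_def finite_PiE w_def)
  also have "(\<Sum>g\<in>F. w g) = (1 + (real n - 1) * r) ^ n"
    unfolding F_def w_def by (rule sum_PiE_moved_weight)
  finally show ?thesis .
qed

lemma fixed_graphs_negligible:
  "(\<lambda>n. real (\<Sum>p\<in>vertex_perms n - {id}. card (fixed_graphs n p)) / 2 ^ card (two_subsets {..<n})) \<longlonglongrightarrow> 0"
proof -
  have bound: "real (\<Sum>p\<in>vertex_perms n - {id}. card (fixed_graphs n p)) / 2 ^ card (two_subsets {..<n})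
      \<le> (1 + (real n - 1) * 2 powr (- (real n - 3) / 8)) ^ n - 1" for n
  proof -
    have "real (\<Sum>p\<in>vertex_perms n - {id}. card (fixed_graphs n p))
        \<le> (\<Sum>p\<in>vertex_perms n - {id}. 2 ^ card (two_subsets {..<n}) *
            (2 powr (- (real n - 3) / 8)) ^ card {x. p x \<noteq> x})"
      unfolding of_nat_sum by (intro sum_mono card_fixed_graphs_le) simp
    also have "\<dots> \<le> 2 ^ card (two_subsets {..<n}) * ((1 + (real n - 1) * 2 powr (- (real n - 3) / 8)) ^ n - 1)"
      by (simp add: sum_distrib_left[symmetric] sum_vertex_perms_power_card_moved_le)
    finally show ?thesis by (simp add: pos_divide_le_eq mult.commute)
  qed
  have "(\<lambda>n::nat. (1 + (real n - 1) * 2 powr (- (real n - 3) / 8)) ^ n - 1) \<longlonglongrightarrow> 0"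
    by real_asymp
  then show ?thesis
    by (rule tendsto_sandwich[rotated 2, OF tendsto_const])
      (use bound in \<open>auto intro!: always_eventually divide_nonneg_nonneg sum_nonneg\<close>)
qed

section \<open>Counting isomorphism classes\<close>

lemma card_graphs_le_card_graph_classes:
  "2 ^ card (two_subsets {..<n}) \<le> card (graph_classes n) * fact n"
proof -
  let ?G = "Pow (two_subsets {..<n})"
  have "graph_classes n = iso_class n ` ?G" by (auto simp: graph_classes_def graph_on_iff)
  have aut: "1 \<le> card (automorphisms n E)" for E
  proof -
    have "id \<in> automorphisms n E" by (simp add: automorphisms_def id_in_vertex_perms)
    moreover have "finite (automorphisms n E)"
      by (rule finite_subset[OF _ finite_vertex_perms]) (auto simp: automorphisms_def)
    ultimately show ?thesis by (metis One_nat_def Suc_leI card_gt_0_iff empty_iff)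
  qed
  have "(\<Sum>E\<in>?G. 1) \<le> (\<Sum>E\<in>?G. card (automorphisms n E))" by (rule sum_mono) (rule aut)
  then have "card ?G \<le> (\<Sum>E\<in>?G. card (automorphisms n E))" by simp
  also have "\<dots> = card (graph_classes n) * fact n"
    unfolding \<open>graph_classes n = iso_class n ` ?G\<close>
    by (rule card_iso_classes_mult_fact[symmetric]) (simp_all add: relabel_graph)
  finally show ?thesis by (simp add: card_Pow finite_two_subsets)
qed

lemma card_unlinked_classes_le:
  "card (iso_class n ` unlinked_graphs k n) * fact n
    \<le> card (unlinked_graphs k n) + (\<Sum>p\<in>vertex_perms n - {id}. card (fixed_graphs n p))"
proof -
  have graphs: "unlinked_graphs k n \<subseteq> Pow (two_subsets {..<n})" by (auto simp: unlinked_graphs_def)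
  have "card (iso_class n ` unlinked_graphs k n) * fact n =
      (\<Sum>E\<in>unlinked_graphs k n. card (automorphisms n E))"
    by (rule card_iso_classes_mult_fact[OF graphs relabel_unlinked_graphs])
  also have "\<dots> \<le> card (unlinked_graphs k n) + (\<Sum>p\<in>vertex_perms n - {id}. card (fixed_graphs n p))"
    by (rule sum_automorphisms_le[OF graphs])
  finally show ?thesis .
qed

lemma unique_classes_ratio_le:
  assumes "k \<ge> 1" and "n \<ge> k + 3"
  shows "real (card (unique_classes (h_harm k) n)) / real (card (graph_classes n))
    \<le> real (card (unlinked_graphs k n)) / 2 ^ card (two_subsets {..<n})
      + real (\<Sum>p\<in>vertex_perms n - {id}. card (fixed_graphs n p)) / 2 ^ card (two_subsets {..<n})"
proof -
  define u where "u = real (card (unique_classes (h_harm k) n))"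
  define c where "c = real (card (graph_classes n))"
  define a :: real where "a = of_nat (card (unlinked_graphs k n) + (\<Sum>p\<in>vertex_perms n - {id}. card (fixed_graphs n p)))"
  define N :: real where "N = 2 ^ card (two_subsets {..<n})"
  have "finite (unlinked_graphs k n)"
    by (rule finite_subset[of _ "Pow (two_subsets {..<n})"]) (auto simp: unlinked_graphs_def finite_two_subsets)
  then have "card (unique_classes (h_harm k) n) \<le> card (iso_class n ` unlinked_graphs k n)"
    using unique_classes_subset_unlinked[OF assms] by (intro card_mono) auto
  then have "card (unique_classes (h_harm k) n) * fact n
      \<le> card (unlinked_graphs k n) + (\<Sum>p\<in>vertex_perms n - {id}. card (fixed_graphs n p))"
    using card_unlinked_classes_le[of n k] by (meson mult_le_mono1 order_trans)
  then have "u * fact n \<le> a" unfolding u_def a_def by (metis of_nat_fact of_nat_mono of_nat_mult)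
  have "N \<le> c * fact n"
    using of_nat_mono[OF card_graphs_le_card_graph_classes[of n]] by (simp add: N_def c_def)
  moreover have "N > 0" by (simp add: N_def)
  ultimately have "c * fact n > 0" by linarith
  then have "u / c = (u * fact n) / (c * fact n)" by simp
  also have "\<dots> \<le> a / (c * fact n)"
    using \<open>u * fact n \<le> a\<close> \<open>c * fact n > 0\<close> by (intro divide_right_mono) simp_all
  also have "\<dots> \<le> a / N"
  proof (rule divide_left_mono)
    show "0 \<le> a" unfolding a_def by (rule of_nat_0_le_iff)
  qed (use \<open>N \<le> c * fact n\<close> \<open>N > 0\<close> in simp_all)
  finally show ?thesis by (simp add: u_def c_def a_def N_def add_divide_distrib)
qed

theorem theorem7:
  fixes k :: nat
  assumes "k \<ge> 1"
  shows "weakly_distinguishing (h_harm k)"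
proof -
  let ?bound = "\<lambda>n. real (card (unlinked_graphs k n)) / 2 ^ card (two_subsets {..<n})
    + real (\<Sum>p\<in>vertex_perms n - {id}. card (fixed_graphs n p)) / 2 ^ card (two_subsets {..<n})"
  have lim: "?bound \<longlonglongrightarrow> 0"
    using tendsto_add[OF unlinked_graphs_negligible fixed_graphs_negligible] by simp
  have upper: "\<forall>\<^sub>F n in sequentially.
      real (card (unique_classes (h_harm k) n)) / real (card (graph_classes n)) \<le> ?bound n"
    using unique_classes_ratio_le[OF assms] by (intro eventually_sequentiallyI[of "k + 3"])
  show ?thesis
    unfolding weakly_distinguishing_def by (rule tendsto_sandwich[OF _ upper tendsto_const lim]) simp
qed

end
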